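(* For any $g\ge2$, $n\ge1$ and any $a_1,\dots,a_n\in\mathbb{Z}_{\ge0}$, $$P_{g,n+1}(a_1,\dots,a_n,1)-P_{g,n+1}(a_1,\dots,a_n,0)=P_{g,n}(a_1,\dots,a_n)\cdot\Big(4\sum_{i=1}^na_i-8g+10-2n\Big).$$
   Context: For $g\ge2$, $m\ge1$, $$P_{g,m}(a_1,\dots,a_m):=\sum_{k=1}^m\frac{(-1)^k(2g-3+k)!}{k!}\sum_{(I_1,\dots,I_k)}\ \sum_{\substack{d_1,\dots,d_k\in\mathbb{Z}_{\ge0}\\ d_1+\cdots+d_k=g-2+m}}\prod_{j=1}^k\binom{2a_{[I_j]}+1}{2d_j}\prod_{i=1}^{|I_j|-1}(2d_j+1-2i),$$ where $(I_1,\dots,I_k)$ runs over ordered $k$-tuples of nonempty pairwise disjoint subsets of $\{1,\dots,m\}$ with union $\{1,\dots,m\}$, $a_{[I]}:=\sum_{\ell\in I}a_\ell$, and $\binom{x}{r}$ is the usual binomial coefficient (zero if $r>x$). *)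

theory Defs
  imports Complex_Main
begin

definition ordered_set_partitions :: "nat \<Rightarrow> nat \<Rightarrow> nat set list set" where
  "ordered_set_partitions m k =
     {Is. length Is = k \<and> (\<forall>I\<in>set Is. I \<noteq> {})
        \<and> (\<forall>i<k. \<forall>j<k. i \<noteq> j \<longrightarrow> Is ! i \<inter> Is ! j = {})
        \<and> \<Union>(set Is) = {1..m}}"

definition weak_compositions :: "nat \<Rightarrow> nat \<Rightarrow> nat list set" where
  "weak_compositions k s = {ds. length ds = k \<and> sum_list ds = s}"

definition asum :: "(nat \<Rightarrow> nat) \<Rightarrow> nat set \<Rightarrow> nat" where
  "asum a I = (\<Sum>l\<in>I. a l)"

definition P :: "nat \<Rightarrow> nat \<Rightarrow> (nat \<Rightarrow> nat) \<Rightarrow> rat" where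
  "P g m a =
    (\<Sum>k=1..m. (-1)^k * of_nat (fact (2*g - 3 + k)) / of_nat (fact k) *
      (\<Sum>Is\<in>ordered_set_partitions m k.
        \<Sum>ds\<in>weak_compositions k (g - 2 + m).
          \<Prod>j<k. of_nat ((2 * asum a (Is ! j) + 1) choose (2 * (ds ! j)))
                 * (\<Prod>i=1..card (Is ! j) - 1. of_nat (2 * (ds ! j) + 1) - 2 * of_nat i)))"

end

theory Submission
  imports Defs "HOL-Library.Disjoint_Sets"
begin

text \<open>
  Write P as a sum over k of coefficients c(k) = (-1)^k (2g-3+k)!/k! times T(k), the sum over
  ordered partitions into k blocks of the convolution (in the degrees d_j) of one weight
  sequence per block. Raising a(n+1) from 0 to 1 only changes the weight of the block
  containing n+1. If that block is {n+1}, the change is 3 in degree 1 and 0 otherwise. If it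
  is J + {n+1}, the identity (m+1) (C(N+2,m+2) - C(N,m+2)) = C(N,m) (2N-m+1) turns the change
  into the weight of J one degree lower, multiplied by 4 a(J) + 3 - 2d. Summing over the ways
  of adding n+1 to a partition of {1..n}, and using that multiplication by the degree is a
  derivation of the convolution product, expresses the difference through T(k) and T(k-1) of
  the partitions of {1..n}; the recursion (k+1) c(k+1) = -(2g-2+k) c(k) then cancels all
  T(k-1) terms against part of the T(k) terms.
\<close>

definition insert_nth :: "nat \<Rightarrow> 'a \<Rightarrow> 'a list \<Rightarrow> 'a list" where
  "insert_nth p x xs = take p xs @ x # drop p xs"

lemma length_insert_nth [simp]: "length (insert_nth p x xs) = Suc (length xs)"
  by (simp add: insert_nth_def)

lemma set_insert_nth [simp]: "set (insert_nth p x xs) = insert x (set xs)"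
  unfolding insert_nth_def by (induction xs arbitrary: p) (auto simp: take_Cons' drop_Cons')

lemma distinct_insert_nth [simp]: "distinct (insert_nth p x xs) \<longleftrightarrow> x \<notin> set xs \<and> distinct xs"
proof -
  have "distinct (take p xs @ x # drop p xs) = distinct (x # (take p xs @ drop p xs))"
    by (auto simp del: append_take_drop_id)
  then show ?thesis
    by (simp add: insert_nth_def)
qed

lemma map_insert_nth: "map f (insert_nth p x xs) = insert_nth p (f x) (map f xs)"
  by (simp add: insert_nth_def take_map drop_map)

lemma insert_nth_list_update_self: "p \<le> length xs \<Longrightarrow> (insert_nth p y xs)[p := x] = insert_nth p x xs"
  by (simp add: insert_nth_def list_update_append)

lemma insert_nth_inject:
  assumes "insert_nth p x xs = insert_nth p x ys" "p \<le> length xs" "p \<le> length ys"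
  shows "xs = ys"
proof -
  have "take p xs = take p ys \<and> drop p xs = drop p ys"
    using assms by (simp add: insert_nth_def append_eq_append_conv)
  then show ?thesis
    by (metis append_take_drop_id)
qed

section \<open>Convolution of finitely many sequences\<close>

fun convolution :: "(nat \<Rightarrow> 'a::comm_semiring_1) list \<Rightarrow> nat \<Rightarrow> 'a" where
  "convolution [] D = (if D = 0 then 1 else 0)"
| "convolution (f # fs) D = (\<Sum>d\<le>D. f d * convolution fs (D - d))"

lemma finite_weak_compositions: "finite (weak_compositions k D)"
proof (rule finite_subset)
  show "weak_compositions k D \<subseteq> {ds. set ds \<subseteq> {..D} \<and> length ds = k}"
    by (auto simp: weak_compositions_def member_le_sum_list)
  show "finite {ds. set ds \<subseteq> {..D} \<and> length ds = k}"
    by (rule finite_lists_length_eq) simp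
qed

lemma weak_compositions_0: "weak_compositions 0 D = (if D = 0 then {[]} else {})"
  by (auto simp: weak_compositions_def)

lemma weak_compositions_Suc:
  "weak_compositions (Suc k) D = (\<lambda>(d, ds). d # ds) ` (SIGMA d:{..D}. weak_compositions k (D - d))"
proof (intro set_eqI iffI)
  fix xs assume "xs \<in> weak_compositions (Suc k) D"
  then obtain d ds where "xs = d # ds" "length ds = k" "d + sum_list ds = D"
    by (cases xs) (auto simp: weak_compositions_def)
  then show "xs \<in> (\<lambda>(d, ds). d # ds) ` (SIGMA d:{..D}. weak_compositions k (D - d))"
    by (auto simp: weak_compositions_def intro!: image_eqI[where x="(d, ds)"])
qed (auto simp: weak_compositions_def)

lemma convolution_eq_sum_weak_compositions:
  "convolution fs D = (\<Sum>ds\<in>weak_compositions (length fs) D. \<Prod>j<length fs. (fs ! j) (ds ! j))"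
proof (induction fs arbitrary: D)
  case Nil
  then show ?case by (simp add: weak_compositions_0)
next
  case (Cons f fs)
  have inj: "inj_on (\<lambda>(d, ds). d # ds) (SIGMA d:{..D}. weak_compositions (length fs) (D - d))"
    by (auto simp: inj_on_def)
  have "(\<Sum>ds\<in>weak_compositions (length (f # fs)) D. \<Prod>j<length (f # fs). ((f # fs) ! j) (ds ! j))
      = (\<Sum>(d, ds)\<in>(SIGMA d:{..D}. weak_compositions (length fs) (D - d)).
           f d * (\<Prod>j<length fs. (fs ! j) (ds ! j)))"
    by (simp add: weak_compositions_Suc sum.reindex[OF inj] prod.lessThan_Suc_shift
        del: prod.lessThan_Suc) (simp add: case_prod_unfold)
  also have "\<dots> = (\<Sum>d\<le>D. f d * convolution fs (D - d))"
    by (subst sum.Sigma[symmetric])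
      (auto simp: finite_weak_compositions sum_distrib_left[symmetric] Cons.IH)
  finally show ?case by simp
qed

lemma convolution_list_update_diff:
  fixes fs :: "(nat \<Rightarrow> 'a::comm_ring_1) list"
  assumes "p < length fs"
  shows "convolution (fs[p := f]) D - convolution (fs[p := g]) D
       = convolution (fs[p := (\<lambda>d. f d - g d)]) D"
  using assms
proof (induction fs arbitrary: p D)
  case (Cons h fs)
  then show ?case
    by (cases p) (simp_all add: sum_subtractf[symmetric] algebra_simps
        flip: right_diff_distrib)
qed simp

lemma convolution_list_update_0:
  assumes "p < length fs" "h 0 = 0"
  shows "convolution (fs[p := h]) 0 = 0"
  using assms by (induction fs arbitrary: p) (auto split: nat.split)

lemma convolution_list_update_Suc:
  assumes "p < length fs" "h 0 = 0"
  shows "convolution (fs[p := h]) (Suc D) = convolution (fs[p := (\<lambda>d. h (Suc d))]) D"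
  using assms
proof (induction fs arbitrary: p D)
  case (Cons f fs)
  show ?case
  proof (cases p)
    case 0
    then show ?thesis
      using Cons.prems by (simp add: sum.atMost_Suc_shift del: sum.atMost_Suc)
  next
    case (Suc q)
    with Cons.prems have q: "q < length fs" by simp
    have "convolution ((f # fs)[p := h]) (Suc D)
        = (\<Sum>d\<le>D. f d * convolution (fs[q := h]) (Suc D - d))"
      using Suc convolution_list_update_0[where h=h, OF q Cons.prems(2)] by simp
    also have "\<dots> = (\<Sum>d\<le>D. f d * convolution (fs[q := (\<lambda>d. h (Suc d))]) (D - d))"
      by (intro sum.cong refl) (simp add: Suc_diff_le Cons.IH[OF q Cons.prems(2)])
    finally show ?thesis
      using Suc by simp
  qed
qed simp

lemma convolution_insert_nth_delta:
  assumes "p \<le> length fs"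
  shows "convolution (insert_nth p (\<lambda>d. if d = 0 then c else 0) fs) D
       = c * convolution fs D"
  using assms unfolding insert_nth_def
proof (induction fs arbitrary: p D)
  have delta: "(\<Sum>d\<le>D. (if d = 0 then c else 0) * F d) = c * F 0" for D and F :: "nat \<Rightarrow> 'a"
    by (induction D) auto
  have delta_hd: "convolution ((\<lambda>d. if d = 0 then c else 0) # gs) E = c * convolution gs E" for gs E
    by (simp only: convolution.simps delta) simp
  {
    case Nil
    then show ?case by (simp add: delta_hd del: convolution.simps)
  next
    case (Cons f fs)
    show ?case
    proof (cases p)
      case 0
      then show ?thesis by (simp add: delta_hd del: convolution.simps)
    next
      case (Suc q)
      then show ?thesis using Cons by (simp add: sum_distrib_left algebra_simps)
    qed
  }
qed

text \<open>Leibniz rule: multiplying a factor by its degree is a derivation of the convolution product.\<close>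
lemma sum_convolution_list_update_linear:
  fixes fs :: "(nat \<Rightarrow> 'a::comm_ring_1) list"
  shows "(\<Sum>j<length fs. convolution (fs[j := (\<lambda>d. (fs ! j) d * (\<alpha> j - c * of_nat d))]) D)
       = convolution fs D * ((\<Sum>j<length fs. \<alpha> j) - c * of_nat D)"
proof (induction fs arbitrary: \<alpha> D)
  case Nil
  then show ?case by simp
next
  case (Cons f fs)
  define \<beta> where "\<beta> = (\<Sum>j<length fs. \<alpha> (Suc j))"
  have IH: "(\<Sum>j<length fs. convolution (fs[j := (\<lambda>d. (fs ! j) d * (\<alpha> (Suc j) - c * of_nat d))]) E)
      = convolution fs E * (\<beta> - c * of_nat E)" for E
    using Cons.IH[of "\<lambda>j. \<alpha> (Suc j)"] by (simp add: \<beta>_def)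
  let ?A = "\<Sum>d\<le>D. f d * (\<alpha> 0 - c * of_nat d) * convolution fs (D - d)"
  have "(\<Sum>j<length (f # fs).
           convolution ((f # fs)[j := (\<lambda>d. ((f # fs) ! j) d * (\<alpha> j - c * of_nat d))]) D)
      = ?A + (\<Sum>j<length fs. \<Sum>d\<le>D. f d *
             convolution (fs[j := (\<lambda>d. (fs ! j) d * (\<alpha> (Suc j) - c * of_nat d))]) (D - d))"
    by (simp add: sum.lessThan_Suc_shift del: sum.lessThan_Suc)
  also have "(\<Sum>j<length fs. \<Sum>d\<le>D. f d *
             convolution (fs[j := (\<lambda>d. (fs ! j) d * (\<alpha> (Suc j) - c * of_nat d))]) (D - d))
      = (\<Sum>d\<le>D. f d * (convolution fs (D - d) * (\<beta> - c * of_nat (D - d))))"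
    by (subst sum.swap) (simp add: sum_distrib_left[symmetric] IH)
  also have "?A + (\<Sum>d\<le>D. f d * (convolution fs (D - d) * (\<beta> - c * of_nat (D - d))))
      = (\<Sum>d\<le>D. f d * convolution fs (D - d) * (\<alpha> 0 + \<beta> - c * of_nat D))"
    unfolding sum.distrib[symmetric]
  proof (intro sum.cong refl)
    fix d assume "d \<in> {..D}"
    then have "of_nat (D - d) = (of_nat D - of_nat d :: 'a)"
      by (simp add: of_nat_diff)
    show "f d * (\<alpha> 0 - c * of_nat d) * convolution fs (D - d)
        + f d * (convolution fs (D - d) * (\<beta> - c * of_nat (D - d)))
        = f d * convolution fs (D - d) * (\<alpha> 0 + \<beta> - c * of_nat D)"
      unfolding \<open>of_nat (D - d) = of_nat D - of_nat d\<close> by (simp add: algebra_simps)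
  qed
  also have "\<dots> = convolution (f # fs) D * ((\<Sum>j<length (f # fs). \<alpha> j) - c * of_nat D)"
    by (simp add: sum_distrib_right \<beta>_def sum.lessThan_Suc_shift del: sum.lessThan_Suc)
  finally show ?case .
qed

section \<open>Ordered set partitions\<close>

lemma disjoint_nth_iff_distinct_disjoint:
  assumes "{} \<notin> set Is"
  shows "(\<forall>i<length Is. \<forall>j<length Is. i \<noteq> j \<longrightarrow> Is ! i \<inter> Is ! j = {})
           \<longleftrightarrow> distinct Is \<and> disjoint (set Is)"
proof
  assume "\<forall>i<length Is. \<forall>j<length Is. i \<noteq> j \<longrightarrow> Is ! i \<inter> Is ! j = {}"
  then show "distinct Is \<and> disjoint (set Is)"
    using assms by (auto simp: distinct_conv_nth disjoint_def in_set_conv_nth)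
      (metis Int_absorb nth_mem, metis IntI empty_iff, metis IntI empty_iff)
next
  assume "distinct Is \<and> disjoint (set Is)"
  then show "\<forall>i<length Is. \<forall>j<length Is. i \<noteq> j \<longrightarrow> Is ! i \<inter> Is ! j = {}"
    by (auto simp: disjoint_def nth_eq_iff_index_eq)
qed

lemma ordered_set_partitions_iff:
  "Is \<in> ordered_set_partitions m k \<longleftrightarrow>
     length Is = k \<and> distinct Is \<and> partition_on {1..m} (set Is)"
  using disjoint_nth_iff_distinct_disjoint[of Is]
  by (auto simp: ordered_set_partitions_def partition_on_def)

lemma finite_ordered_set_partitions: "finite (ordered_set_partitions m k)"
proof (rule finite_subset)
  show "ordered_set_partitions m k \<subseteq> {Is. set Is \<subseteq> Pow {1..m} \<and> length Is = k}"
    unfolding ordered_set_partitions_def by blast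
  show "finite {Is. set Is \<subseteq> Pow {1..m} \<and> length Is = k}"
    by (rule finite_lists_length_eq) simp
qed

lemma card_partition_on_le:
  assumes "finite A" "partition_on A Bs"
  shows "card Bs \<le> card A"
proof -
  have blocks: "finite B" "B \<noteq> {}" if "B \<in> Bs" for B
    using assms that by (auto simp: partition_on_def intro: finite_subset)
  have "card Bs = (\<Sum>B\<in>Bs. 1)"
    by simp
  also have "\<dots> \<le> (\<Sum>B\<in>Bs. card B)"
    using blocks by (intro sum_mono) (simp add: Suc_leI card_gt_0_iff)
  also have "\<dots> = card (\<Union>Bs)"
    using blocks partition_onD2[OF assms(2)] by (simp add: card_Union_disjoint)
  also have "\<dots> = card A"
    using partition_onD1[OF assms(2)] by simp
  finally show ?thesis .
qed

lemma ordered_set_partitions_0: "0 < m \<Longrightarrow> ordered_set_partitions m 0 = {}"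
  by (auto simp: ordered_set_partitions_def)

lemma ordered_set_partitions_eq_empty: "m < k \<Longrightarrow> ordered_set_partitions m k = {}"
  using card_partition_on_le[of "{1..m}"]
  by (force simp: ordered_set_partitions_iff distinct_card)

lemma Suc_notin_ordered_set_partition:
  assumes "Js \<in> ordered_set_partitions n k"
  shows "Suc n \<notin> \<Union>(set Js)"
proof -
  have "partition_on {1..n} (set Js)"
    using assms by (simp add: ordered_set_partitions_iff)
  then show ?thesis
    by (simp flip: partition_onD1)
qed

lemma sum_asum_ordered_set_partition:
  assumes "Is \<in> ordered_set_partitions m k"
  shows "(\<Sum>j<k. asum a (Is ! j)) = asum a {1..m}"
proof -
  have Is: "length Is = k" "distinct Is" "partition_on {1..m} (set Is)"
    using assms by (simp_all add: ordered_set_partitions_iff)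
  have "(\<Sum>j<k. asum a (Is ! j)) = (\<Sum>I\<in>set Is. asum a I)"
    using Is by (simp add: sum.distinct_set_conv_list sum_list_sum_nth atLeast0LessThan)
  also have "\<dots> = asum a (\<Union>(set Is))"
  proof -
    have "finite I" if "I \<in> set Is" for I
      using that partition_onD1[OF Is(3)] by (metis Sup_upper finite_atLeastAtMost finite_subset)
    then show ?thesis
      using partition_onD2[OF Is(3)] unfolding asum_def
      by (subst sum.Union_disjoint[simplified]) (auto simp: disjoint_def)
  qed
  finally show ?thesis
    by (simp flip: partition_onD1[OF Is(3)])
qed

lemma partition_on_insert_into_block:
  assumes "x \<notin> A" "x \<notin> B" "x \<notin> \<Union>R" "B \<notin> R" "B \<noteq> {}"
  shows "partition_on (insert x A) (insert (insert x B) R) \<longleftrightarrow> partition_on A (insert B R)"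
proof -
  have "insert x B \<union> \<Union>R = insert x A \<longleftrightarrow> B \<union> \<Union>R = A"
    using assms(1-3) by (simp add: insert_ident)
  moreover have "disjoint (insert (insert x B) R) \<longleftrightarrow> disjoint (insert B R)"
    using assms(3,4) by (auto simp: pairwise_insert disjnt_def)
  ultimately show ?thesis
    using assms(5) by (simp add: partition_on_def)
qed

lemma partition_on_insert_singleton:
  assumes "x \<notin> A" "{x} \<notin> Bs"
  shows "partition_on (insert x A) (insert {x} Bs) \<longleftrightarrow> partition_on A Bs"
proof (cases "x \<in> \<Union>Bs")
  case True
  then obtain B where "B \<in> Bs" "x \<in> B"
    by blast
  then have "\<not> disjoint (insert {x} Bs)"
    using assms(2) by (auto simp: pairwise_insert disjnt_def)
  moreover have "\<Union>Bs \<noteq> A"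
    using True assms(1) by blast
  ultimately show ?thesis
    by (simp add: partition_on_def)
next
  case False
  then have "disjnt {x} (\<Union>Bs)"
    by simp
  then show ?thesis
    using assms(1) by (simp add: partition_on_insert Diff_insert_absorb)
qed

lemma insert_nth_singleton_in_ordered_set_partitions_iff:
  "insert_nth p {Suc n} Js \<in> ordered_set_partitions (Suc n) (Suc k)
     \<longleftrightarrow> Js \<in> ordered_set_partitions n k"
proof -
  have "{Suc n} \<notin> set Js" if "Js \<in> ordered_set_partitions n k"
    using Suc_notin_ordered_set_partition[OF that] by blast
  moreover have "{1..Suc n} = insert (Suc n) {1..n}"
    by auto
  ultimately show ?thesis
    unfolding ordered_set_partitions_iff
    by (auto simp: partition_on_insert_singleton)
qed

lemma list_update_insert_in_ordered_set_partitions_iff: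
  assumes j: "j < length Js" and "Js ! j \<noteq> {}" "Suc n \<notin> \<Union>(set Js)"
  shows "Js[j := insert (Suc n) (Js ! j)] \<in> ordered_set_partitions (Suc n) k
     \<longleftrightarrow> Js \<in> ordered_set_partitions n k"
proof -
  define L M B where "L = take j Js" and "M = drop (Suc j) Js" and "B = Js ! j"
  define R where "R = set L \<union> set M"
  have Js: "Js = L @ B # M" and upd: "Js[j := insert (Suc n) B] = L @ insert (Suc n) B # M"
    using j by (simp_all add: L_def M_def B_def id_take_nth_drop upd_conv_take_nth_drop)
  have "B \<in> set Js" "R \<subseteq> set Js"
    using j by (auto simp: B_def R_def L_def M_def dest: in_set_takeD in_set_dropD)
  then have x: "Suc n \<notin> B" "Suc n \<notin> \<Union>R" "Suc n \<notin> {1..n}" "B \<noteq> {}"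
    using assms(2,3) by (auto simp: B_def)
  then have "insert (Suc n) B \<notin> R"
    by blast
  have set_eq: "set (L @ C # M) = insert C R" and distinct_eq: "distinct (L @ C # M) \<longleftrightarrow> C \<notin> R \<and> distinct (L @ M)" for C
    by (auto simp: R_def)
  have B_fresh: "B \<notin> R"
    if "L @ insert (Suc n) B # M \<in> ordered_set_partitions (Suc n) k
        \<or> L @ B # M \<in> ordered_set_partitions n k"
  proof
    assume "B \<in> R"
    then have "\<not> disjoint (insert (insert (Suc n) B) R) \<and> \<not> distinct (L @ B # M)"
      using x(1,4) unfolding distinct_eq by (auto simp: pairwise_insert disjnt_def)
    then show False
      using that partition_onD2 unfolding ordered_set_partitions_iff set_eq by blast
  qed
  have "{1..Suc n} = insert (Suc n) {1..n}"
    by auto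
  then have main: "L @ insert (Suc n) B # M \<in> ordered_set_partitions (Suc n) k
     \<longleftrightarrow> L @ B # M \<in> ordered_set_partitions n k" if "B \<notin> R"
    using that x \<open>insert (Suc n) B \<notin> R\<close> unfolding ordered_set_partitions_iff set_eq distinct_eq
    by (simp add: partition_on_insert_into_block)
  have upd': "Js[j := insert (Suc n) (Js ! j)] = L @ insert (Suc n) B # M"
    using upd by (simp only: B_def)
  have Js': "Js \<in> ordered_set_partitions n k \<longleftrightarrow> L @ B # M \<in> ordered_set_partitions n k"
    using Js by simp
  show ?thesis
    unfolding upd' Js' using main B_fresh by blast
qed

lemma inj_on_insert_nth_singleton:
  "inj_on (\<lambda>(Js, p). insert_nth p {x} Js) {(Js, p). x \<notin> \<Union>(set Js) \<and> p \<le> length Js}"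
proof (rule inj_onI, clarify)
  fix Js p Js' p'
  assume Js: "x \<notin> \<Union>(set Js)" "p \<le> length Js" and Js': "x \<notin> \<Union>(set Js')" "p' \<le> length Js'"
    and eq: "insert_nth p {x} Js = insert_nth p' {x} Js'"
  have position: "length (takeWhile (\<lambda>I. x \<notin> I) (insert_nth q {x} Ks)) = q"
    if "x \<notin> \<Union>(set Ks)" "q \<le> length Ks" for q Ks
  proof -
    have "\<forall>I\<in>set (take q Ks). x \<notin> I"
      using that(1) by (auto dest: in_set_takeD)
    then show ?thesis
      using that(2) by (simp add: insert_nth_def)
  qed
  have "p = p'"
    using position[OF Js] position[OF Js'] eq by simp
  then show "Js = Js' \<and> p = p'"
    using insert_nth_inject[of p "{x}" Js Js'] eq Js(2) Js'(2) by simp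
qed

lemma inj_on_list_update_insert:
  "inj_on (\<lambda>(Js, j). Js[j := insert x (Js ! j)]) {(Js, j). x \<notin> \<Union>(set Js) \<and> j < length Js}"
proof (rule inj_onI, clarify)
  fix Js j Js' j'
  assume Js: "x \<notin> \<Union>(set Js)" "j < length Js" and Js': "x \<notin> \<Union>(set Js')" "j' < length Js'"
    and eq: "Js[j := insert x (Js ! j)] = Js'[j' := insert x (Js' ! j')]"
  have position: "length (takeWhile (\<lambda>I. x \<notin> I) (Ks[i := insert x (Ks ! i)])) = i"
    if "x \<notin> \<Union>(set Ks)" "i < length Ks" for i Ks
  proof -
    have "\<forall>I\<in>set (take i Ks). x \<notin> I"
      using that(1) by (auto dest: in_set_takeD)
    then show ?thesis
      using that(2) by (simp add: upd_conv_take_nth_drop)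
  qed
  have recover: "(Ks[i := insert x (Ks ! i)])[i := Ks[i := insert x (Ks ! i)] ! i - {x}] = Ks"
    if "x \<notin> \<Union>(set Ks)" "i < length Ks" for i Ks
    using that by auto
  have "j = j'"
    using position[OF Js] position[OF Js'] eq by simp
  then show "Js = Js' \<and> j = j'"
    using recover[OF Js] recover[OF Js'] eq by metis
qed

lemma ordered_set_partitions_Suc_with_singleton:
  assumes "0 < k"
  shows "ordered_set_partitions (Suc n) k \<inter> {Is. {Suc n} \<in> set Is}
       = (\<lambda>(Js, p). insert_nth p {Suc n} Js) ` (ordered_set_partitions n (k - 1) \<times> {..<k})"
proof (intro equalityI subsetI)
  fix Is
  assume "Is \<in> ordered_set_partitions (Suc n) k \<inter> {Is. {Suc n} \<in> set Is}"
  then have Is: "Is \<in> ordered_set_partitions (Suc n) k" and "{Suc n} \<in> set Is"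
    by auto
  then obtain p where p: "p < length Is" "Is ! p = {Suc n}"
    by (auto simp: in_set_conv_nth)
  define Js where "Js = take p Is @ drop (Suc p) Is"
  have "Is = take p Is @ {Suc n} # drop (Suc p) Is"
    using id_take_nth_drop[OF p(1)] unfolding p(2) .
  also have "\<dots> = insert_nth p {Suc n} Js"
    using p(1) by (simp add: insert_nth_def Js_def)
  finally have Is_eq: "Is = insert_nth p {Suc n} Js" .
  moreover have "p < k"
    using Is p(1) by (simp add: ordered_set_partitions_iff)
  moreover have "Js \<in> ordered_set_partitions n (k - 1)"
  proof -
    have "insert_nth p {Suc n} Js \<in> ordered_set_partitions (Suc n) (Suc (k - 1))"
      using Is Is_eq assms by simp
    then show ?thesis
      by (simp add: insert_nth_singleton_in_ordered_set_partitions_iff)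
  qed
  ultimately show "Is \<in> (\<lambda>(Js, p). insert_nth p {Suc n} Js) ` (ordered_set_partitions n (k - 1) \<times> {..<k})"
    by (intro image_eqI[where x="(Js, p)"]) auto
next
  fix Is
  assume "Is \<in> (\<lambda>(Js, p). insert_nth p {Suc n} Js) ` (ordered_set_partitions n (k - 1) \<times> {..<k})"
  then show "Is \<in> ordered_set_partitions (Suc n) k \<inter> {Is. {Suc n} \<in> set Is}"
    using assms insert_nth_singleton_in_ordered_set_partitions_iff[of _ n _ "k - 1"] by auto
qed

lemma ordered_set_partition_remove_from_block:
  assumes Is: "Is \<in> ordered_set_partitions (Suc n) k" and single: "{Suc n} \<notin> set Is"
  obtains Js j where "Js \<in> ordered_set_partitions n k" "j < k" "Is = Js[j := insert (Suc n) (Js ! j)]"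
proof -
  have Is': "length Is = k" "distinct Is" "partition_on {1..Suc n} (set Is)"
    using Is by (simp_all add: ordered_set_partitions_iff)
  then have "Suc n \<in> \<Union>(set Is)"
    by (simp flip: partition_onD1)
  then obtain j where j: "j < k" "Suc n \<in> Is ! j"
    using Is'(1) by (metis UnionE in_set_conv_nth)
  define Js where "Js = Is[j := Is ! j - {Suc n}]"
  have Js_j: "Js ! j = Is ! j - {Suc n}"
    using j Is'(1) by (simp add: Js_def)
  have Is_eq: "Is = Js[j := insert (Suc n) (Js ! j)]"
    using j Is'(1) by (simp add: Js_def insert_absorb)
  have "Is ! j \<noteq> {Suc n}"
    using j(1) single nth_mem[of j Is] Is'(1) by metis
  then have "Js ! j \<noteq> {}"
    using j(2) unfolding Js_j by blast
  moreover have "Suc n \<notin> \<Union>(set Js)"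
  proof -
    have "Suc n \<notin> I" if "I \<in> set Is" "I \<noteq> Is ! j" for I
      using disjointD[OF partition_onD2[OF Is'(3)] that(1) nth_mem[of j Is] that(2)] j Is'(1)
      by blast
    then show ?thesis
      using j Is'(1,2) by (auto simp: Js_def set_update_distinct)
  qed
  moreover have "j < length Js"
    using j Is'(1) by (simp add: Js_def)
  moreover have "Js[j := insert (Suc n) (Js ! j)] \<in> ordered_set_partitions (Suc n) k"
    using Is Is_eq by simp
  ultimately have "Js \<in> ordered_set_partitions n k"
    using list_update_insert_in_ordered_set_partitions_iff by blast
  then show ?thesis
    using that j(1) Is_eq by blast
qed

lemma ordered_set_partitions_Suc_without_singleton:
  "ordered_set_partitions (Suc n) k - {Is. {Suc n} \<in> set Is}
       = (\<lambda>(Js, j). Js[j := insert (Suc n) (Js ! j)]) ` (ordered_set_partitions n k \<times> {..<k})"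
proof (intro equalityI subsetI)
  fix Is
  assume "Is \<in> ordered_set_partitions (Suc n) k - {Is. {Suc n} \<in> set Is}"
  then obtain Js j where "Js \<in> ordered_set_partitions n k" "j < k" "Is = Js[j := insert (Suc n) (Js ! j)]"
    by (auto elim: ordered_set_partition_remove_from_block)
  then show "Is \<in> (\<lambda>(Js, j). Js[j := insert (Suc n) (Js ! j)]) ` (ordered_set_partitions n k \<times> {..<k})"
    by (intro image_eqI[where x="(Js, j)"]) auto
next
  fix Is
  assume "Is \<in> (\<lambda>(Js, j). Js[j := insert (Suc n) (Js ! j)]) ` (ordered_set_partitions n k \<times> {..<k})"
  then obtain Js j where Js: "Js \<in> ordered_set_partitions n k" and j: "j < k"
    and Is: "Is = Js[j := insert (Suc n) (Js ! j)]"
    by auto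
  have Js': "length Js = k" "partition_on {1..n} (set Js)"
    using Js by (simp_all add: ordered_set_partitions_iff)
  have fresh: "Suc n \<notin> \<Union>(set Js)"
    by (rule Suc_notin_ordered_set_partition[OF Js])
  have nonempty: "Js ! j \<noteq> {}"
    using partition_onD3[OF Js'(2)] nth_mem[of j Js] j Js'(1) by metis
  have "{Suc n} \<noteq> insert (Suc n) (Js ! j)" "{Suc n} \<notin> set Js"
    using nonempty fresh nth_mem[of j Js] j Js'(1) by auto
  then have "{Suc n} \<notin> set Is"
    using set_update_subset_insert[of Js j "insert (Suc n) (Js ! j)"] unfolding Is by blast
  moreover have "Is \<in> ordered_set_partitions (Suc n) k"
    using Js j Js'(1) nonempty fresh unfolding Is
    by (simp add: list_update_insert_in_ordered_set_partitions_iff)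
  ultimately show "Is \<in> ordered_set_partitions (Suc n) k - {Is. {Suc n} \<in> set Is}"
    by blast
qed

lemma sum_ordered_set_partitions_Suc:
  assumes "0 < k"
  shows "(\<Sum>Is\<in>ordered_set_partitions (Suc n) k. F Is)
       = (\<Sum>(Js, p)\<in>ordered_set_partitions n (k - 1) \<times> {..<k}. F (insert_nth p {Suc n} Js))
       + (\<Sum>(Js, j)\<in>ordered_set_partitions n k \<times> {..<k}. F (Js[j := insert (Suc n) (Js ! j)]))"
proof -
  note fresh = Suc_notin_ordered_set_partition
  have inj_singleton: "inj_on (\<lambda>(Js, p). insert_nth p {Suc n} Js) (ordered_set_partitions n (k - 1) \<times> {..<k})"
    by (rule inj_on_subset[OF inj_on_insert_nth_singleton])
      (use assms fresh in \<open>auto simp: ordered_set_partitions_iff\<close>)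
  have inj_update: "inj_on (\<lambda>(Js, j). Js[j := insert (Suc n) (Js ! j)]) (ordered_set_partitions n k \<times> {..<k})"
    by (rule inj_on_subset[OF inj_on_list_update_insert])
      (use fresh in \<open>auto simp: ordered_set_partitions_iff\<close>)
  show ?thesis
    unfolding sum.Int_Diff[OF finite_ordered_set_partitions, of F _ _ "{Is. {Suc n} \<in> set Is}"]
      ordered_set_partitions_Suc_with_singleton[OF assms] ordered_set_partitions_Suc_without_singleton
    by (simp only: sum.reindex[OF inj_singleton] sum.reindex[OF inj_update] comp_def prod.case_distrib)
qed

section \<open>Block weights\<close>

lemma Suc_times_choose_Suc: "Suc m * (N choose Suc m) = (N - m) * (N choose m)"
proof (cases N)
  case (Suc N')
  then show ?thesis
    using Suc_times_binomial[of m N'] binomial_absorb_comp[of N m] by simp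
qed simp

lemma choose_add_2_diff:
  "(of_nat ((N + 2) choose (m + 2)) - of_nat (N choose (m + 2))) * (of_nat m + 1 :: 'a::comm_ring_1)
   = of_nat (N choose m) * (2 * of_nat N - of_nat m + 1)"
proof -
  have pascal: "(N + 2) choose (m + 2) = (N choose m) + 2 * (N choose Suc m) + (N choose (m + 2))"
    by (simp add: numeral_2_eq_2)
  have absorb: "(of_nat m + 1) * of_nat (N choose Suc m) = (of_nat N - of_nat m) * (of_nat (N choose m) :: 'a)"
  proof (cases "m \<le> N")
    case True
    then show ?thesis
      using arg_cong[OF Suc_times_choose_Suc[of m N], of "of_nat :: nat \<Rightarrow> 'a"]
      by (simp add: of_nat_diff algebra_simps)
  next
    case False
    then show ?thesis
      by (simp add: binomial_eq_0)
  qed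
  have "(of_nat ((N + 2) choose (m + 2)) - of_nat (N choose (m + 2))) * (of_nat m + 1 :: 'a)
      = of_nat (N choose m) * (of_nat m + 1) + 2 * ((of_nat m + 1) * of_nat (N choose Suc m))"
    unfolding pascal by (simp add: algebra_simps)
  also have "\<dots> = of_nat (N choose m) * (2 * of_nat N - of_nat m + 1)"
    unfolding absorb by (simp add: algebra_simps)
  finally show ?thesis .
qed

lemma prod_odd_factors_Suc:
  assumes "1 \<le> s"
  shows "(\<Prod>i=1..s. of_nat (2 * Suc d + 1) - 2 * of_nat i :: 'a::comm_ring_1)
       = (of_nat (2 * d) + 1) * (\<Prod>i=1..s - 1. of_nat (2 * d + 1) - 2 * of_nat i)"
proof -
  have "(\<Prod>i=1..s. of_nat (2 * Suc d + 1) - 2 * of_nat i :: 'a)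
      = (of_nat (2 * Suc d + 1) - 2) * (\<Prod>i=Suc 1..Suc (s - 1). of_nat (2 * Suc d + 1) - 2 * of_nat i)"
    using assms by (simp add: prod.atLeast_Suc_atMost)
  also have "(\<Prod>i=Suc 1..Suc (s - 1). of_nat (2 * Suc d + 1) - 2 * of_nat i :: 'a)
      = (\<Prod>i=1..s - 1. of_nat (2 * d + 1) - 2 * of_nat i)"
    by (subst prod.shift_bounds_cl_Suc_ivl) (simp add: algebra_simps)
  finally show ?thesis
    by (simp add: algebra_simps)
qed

definition block_weight :: "(nat \<Rightarrow> nat) \<Rightarrow> nat set \<Rightarrow> nat \<Rightarrow> rat" where
  "block_weight a I d = of_nat ((2 * asum a I + 1) choose (2 * d))
     * (\<Prod>i=1..card I - 1. of_nat (2 * d + 1) - 2 * of_nat i)"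

lemma asum_fun_upd_notin: "x \<notin> I \<Longrightarrow> asum (a(x := v)) I = asum a I"
  unfolding asum_def by (rule sum.cong) auto

lemma block_weight_fun_upd_notin: "x \<notin> I \<Longrightarrow> block_weight (a(x := v)) I = block_weight a I"
  by (rule ext) (simp add: block_weight_def asum_fun_upd_notin)

lemma block_weight_fun_upd_diff_0: "block_weight (a(x := 1)) I 0 - block_weight (a(x := 0)) I 0 = 0"
  by (simp add: block_weight_def)

lemma block_weight_singleton_diff:
  "block_weight (a(x := 1)) {x} (Suc d) - block_weight (a(x := 0)) {x} (Suc d) = (if d = 0 then 3 else 0)"
proof -
  have "block_weight (a(x := 1)) {x} (Suc d) - block_weight (a(x := 0)) {x} (Suc d)
      = of_nat (3 choose (2 * Suc d)) - of_nat (1 choose (2 * Suc d))"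
    by (simp add: block_weight_def asum_def)
  also have "\<dots> = (if d = 0 then 3 else 0)"
    by (cases d) (auto simp: binomial_eq_0 numeral_eq_Suc)
  finally show ?thesis .
qed

lemma block_weight_insert_diff:
  assumes "finite J" "J \<noteq> {}" "x \<notin> J"
  shows "block_weight (a(x := 1)) (insert x J) (Suc d) - block_weight (a(x := 0)) (insert x J) (Suc d)
       = block_weight a J d * (4 * of_nat (asum a J) + 3 - 2 * of_nat d)"
proof -
  define A where "A = asum a J"
  define \<pi> :: rat where "\<pi> = (\<Prod>i=1..card J - 1. of_nat (2 * d + 1) - 2 * of_nat i)"
  have asum_insert: "asum (a(x := v)) (insert x J) = v + A" for v
  proof -
    have "asum (a(x := v)) (insert x J) = v + asum (a(x := v)) J"
      using assms(1,3) by (simp add: asum_def)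
    then show ?thesis
      using asum_fun_upd_notin[OF assms(3)] by (simp add: A_def)
  qed
  have card: "card (insert x J) - 1 = card J" "1 \<le> card J"
    using assms by (simp_all add: Suc_le_eq card_gt_0_iff)
  have "block_weight (a(x := 1)) (insert x J) (Suc d) - block_weight (a(x := 0)) (insert x J) (Suc d)
     = (of_nat ((2 * A + 1 + 2) choose (2 * d + 2)) - of_nat ((2 * A + 1) choose (2 * d + 2)))
       * (\<Prod>i=1..card J. of_nat (2 * Suc d + 1) - 2 * of_nat i)"
    unfolding block_weight_def card(1) asum_insert by (simp add: algebra_simps)
  also have "\<dots> = (of_nat ((2 * A + 1 + 2) choose (2 * d + 2)) - of_nat ((2 * A + 1) choose (2 * d + 2)))
       * (of_nat (2 * d) + 1) * \<pi>"
    unfolding prod_odd_factors_Suc[OF card(2)] \<pi>_def by (simp add: mult.assoc)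
  also have "\<dots> = of_nat ((2 * A + 1) choose (2 * d)) * (2 * of_nat (2 * A + 1) - of_nat (2 * d) + 1) * \<pi>"
    unfolding choose_add_2_diff ..
  also have "\<dots> = block_weight a J d * (4 * of_nat A + 3 - 2 * of_nat d)"
    by (simp add: block_weight_def \<pi>_def A_def algebra_simps)
  finally show ?thesis
    by (simp add: A_def)
qed

section \<open>The recursion\<close>

lemma convolution_insert_singleton_diff:
  assumes "x \<notin> \<Union>(set Js)" "p \<le> length Js"
  shows "convolution (map (block_weight (a(x := 1))) (insert_nth p {x} Js)) (Suc D)
       - convolution (map (block_weight (a(x := 0))) (insert_nth p {x} Js)) (Suc D)
       = 3 * convolution (map (block_weight a) Js) D"
proof -
  define L where "L = map (block_weight a) Js"
  define \<delta> :: "nat \<Rightarrow> rat" where "\<delta> = (\<lambda>d. if d = 0 then 3 else 0)"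
  have p: "p \<le> length L" "p < length (insert_nth p \<delta> L)"
    using assms(2) by (simp_all add: L_def)
  have "map (block_weight (a(x := v))) Js = L" for v
    using assms(1) by (auto simp: L_def block_weight_fun_upd_notin)
  then have weights: "map (block_weight (a(x := v))) (insert_nth p {x} Js)
      = (insert_nth p \<delta> L)[p := block_weight (a(x := v)) {x}]" for v
    using p(1) by (simp add: map_insert_nth insert_nth_list_update_self)
  have "convolution (map (block_weight (a(x := 1))) (insert_nth p {x} Js)) (Suc D)
       - convolution (map (block_weight (a(x := 0))) (insert_nth p {x} Js)) (Suc D)
       = convolution ((insert_nth p \<delta> L)[p := (\<lambda>d. block_weight (a(x := 1)) {x} d
           - block_weight (a(x := 0)) {x} d)]) (Suc D)"
    unfolding weights by (rule convolution_list_update_diff[OF p(2)])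
  also have "\<dots> = convolution ((insert_nth p \<delta> L)[p := \<delta>]) D"
    using block_weight_fun_upd_diff_0 block_weight_singleton_diff
    by (subst convolution_list_update_Suc[OF p(2)]) (simp_all add: \<delta>_def)
  also have "\<dots> = 3 * convolution L D"
    using p(1) by (simp add: insert_nth_list_update_self \<delta>_def convolution_insert_nth_delta)
  finally show ?thesis
    by (simp add: L_def)
qed

lemma convolution_insert_into_block_diff:
  assumes "x \<notin> \<Union>(set Js)" "j < length Js" "Js ! j \<noteq> {}" "finite (Js ! j)"
  shows "convolution (map (block_weight (a(x := 1))) (Js[j := insert x (Js ! j)])) (Suc D)
       - convolution (map (block_weight (a(x := 0))) (Js[j := insert x (Js ! j)])) (Suc D)
       = convolution ((map (block_weight a) Js)[j := (\<lambda>d. block_weight a (Js ! j) d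
           * (4 * of_nat (asum a (Js ! j)) + 3 - 2 * of_nat d))]) D"
proof -
  define L where "L = map (block_weight a) Js"
  have j: "j < length L"
    using assms(2) by (simp add: L_def)
  have "x \<notin> Js ! j"
    using assms(1,2) nth_mem by blast
  note diff = block_weight_insert_diff[OF assms(4,3) this]
  have "map (block_weight (a(x := v))) Js = L" for v
    using assms(1) by (auto simp: L_def block_weight_fun_upd_notin)
  then have weights: "map (block_weight (a(x := v))) (Js[j := insert x (Js ! j)])
      = L[j := block_weight (a(x := v)) (insert x (Js ! j))]" for v
    by (simp add: map_update)
  have "convolution (map (block_weight (a(x := 1))) (Js[j := insert x (Js ! j)])) (Suc D)
       - convolution (map (block_weight (a(x := 0))) (Js[j := insert x (Js ! j)])) (Suc D)
       = convolution (L[j := (\<lambda>d. block_weight (a(x := 1)) (insert x (Js ! j)) d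
           - block_weight (a(x := 0)) (insert x (Js ! j)) d)]) (Suc D)"
    unfolding weights by (rule convolution_list_update_diff[OF j])
  also have "\<dots> = convolution (L[j := (\<lambda>d. block_weight a (Js ! j) d
           * (4 * of_nat (asum a (Js ! j)) + 3 - 2 * of_nat d))]) D"
    using block_weight_fun_upd_diff_0 diff by (subst convolution_list_update_Suc[OF j]) simp_all
  finally show ?thesis
    by (simp add: L_def)
qed

lemma sum_convolution_insert_into_block_diff:
  assumes "Js \<in> ordered_set_partitions n k"
  shows "(\<Sum>j<k. convolution (map (block_weight (a(Suc n := 1))) (Js[j := insert (Suc n) (Js ! j)])) (Suc D)
       - convolution (map (block_weight (a(Suc n := 0))) (Js[j := insert (Suc n) (Js ! j)])) (Suc D))
       = convolution (map (block_weight a) Js) D * (4 * of_nat (asum a {1..n}) + 3 * of_nat k - 2 * of_nat D)"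
proof -
  have Js: "length Js = k" "partition_on {1..n} (set Js)"
    using assms by (simp_all add: ordered_set_partitions_iff)
  define \<alpha> :: "nat \<Rightarrow> rat" where "\<alpha> j = 4 * of_nat (asum a (Js ! j)) + 3" for j
  have "(\<Sum>j<k. convolution (map (block_weight (a(Suc n := 1))) (Js[j := insert (Suc n) (Js ! j)])) (Suc D)
       - convolution (map (block_weight (a(Suc n := 0))) (Js[j := insert (Suc n) (Js ! j)])) (Suc D))
      = (\<Sum>j<k. convolution ((map (block_weight a) Js)[j := (\<lambda>d. (map (block_weight a) Js ! j) d
           * (\<alpha> j - 2 * of_nat d))]) D)"
  proof (intro sum.cong refl)
    fix j
    assume "j \<in> {..<k}"
    then have j: "j < length Js"
      using Js(1) by simp
    have "Js ! j \<noteq> {}" "finite (Js ! j)"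
      using nth_mem[OF j] partition_onD3[OF Js(2)] partition_onD1[OF Js(2)]
      by (metis, metis Sup_upper finite_atLeastAtMost finite_subset)
    with j show "convolution (map (block_weight (a(Suc n := 1))) (Js[j := insert (Suc n) (Js ! j)])) (Suc D)
       - convolution (map (block_weight (a(Suc n := 0))) (Js[j := insert (Suc n) (Js ! j)])) (Suc D)
      = convolution ((map (block_weight a) Js)[j := (\<lambda>d. (map (block_weight a) Js ! j) d
           * (\<alpha> j - 2 * of_nat d))]) D"
      unfolding \<alpha>_def nth_map[OF j]
      by (intro convolution_insert_into_block_diff Suc_notin_ordered_set_partition[OF assms])
  qed
  also have "\<dots> = convolution (map (block_weight a) Js) D * ((\<Sum>j<k. \<alpha> j) - 2 * of_nat D)"
    using sum_convolution_list_update_linear[of "map (block_weight a) Js" \<alpha> 2 D] Js(1) by simp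
  also have "(\<Sum>j<k. \<alpha> j) = 4 * of_nat (\<Sum>j<k. asum a (Js ! j)) + 3 * of_nat k"
    by (simp add: \<alpha>_def sum.distrib sum_distrib_left)
  finally show ?thesis
    by (simp only: sum_asum_ordered_set_partition[OF assms])
qed

definition partition_sum :: "(nat \<Rightarrow> nat) \<Rightarrow> nat \<Rightarrow> nat \<Rightarrow> nat \<Rightarrow> rat" where
  "partition_sum a m k D = (\<Sum>Is\<in>ordered_set_partitions m k. convolution (map (block_weight a) Is) D)"

definition P_coeff :: "nat \<Rightarrow> nat \<Rightarrow> rat" where
  "P_coeff g k = (-1) ^ k * of_nat (fact (2 * g - 3 + k)) / of_nat (fact k)"

lemma P_eq_sum_partition_sum: "P g m a = (\<Sum>k=1..m. P_coeff g k * partition_sum a m k (g - 2 + m))"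
  unfolding P_def P_coeff_def partition_sum_def
proof (intro sum.cong refl arg_cong[where f = "\<lambda>x. _ * x"])
  fix k Is
  assume "Is \<in> ordered_set_partitions m k"
  then have "length Is = k"
    by (simp add: ordered_set_partitions_iff)
  then show "(\<Sum>ds\<in>weak_compositions k (g - 2 + m). \<Prod>j<k.
          of_nat ((2 * asum a (Is ! j) + 1) choose (2 * (ds ! j)))
          * (\<Prod>i=1..card (Is ! j) - 1. of_nat (2 * (ds ! j) + 1) - 2 * of_nat i))
      = convolution (map (block_weight a) Is) (g - 2 + m)"
    by (simp add: convolution_eq_sum_weak_compositions block_weight_def)
qed

lemma P_coeff_Suc:
  assumes "2 \<le> g"
  shows "P_coeff g (Suc k) * (3 * of_nat (Suc k)) = - (3 * (2 * of_nat g - 2 + of_nat k)) * P_coeff g k"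
proof -
  have "of_nat (Suc (2 * g - 3 + k)) = (2 * of_nat g - 2 + of_nat k :: rat)"
    using assms by (simp add: of_nat_diff algebra_simps)
  then have numerator: "(fact (2 * g - 3 + Suc k) :: rat) = (2 * of_nat g - 2 + of_nat k) * fact (2 * g - 3 + k)"
    unfolding add_Suc_right fact_Suc by simp
  have cancel: "x / (s * f) * s = x / f" if "s \<noteq> 0" for x s f :: rat
    using that by (cases "f = 0") (simp_all add: field_simps)
  have "P_coeff g (Suc k) * of_nat (Suc k) = (- 1) ^ Suc k * fact (2 * g - 3 + Suc k) / fact k"
    unfolding P_coeff_def of_nat_fact unfolding fact_Suc[of k] by (rule cancel) simp
  also have "\<dots> = - (2 * of_nat g - 2 + of_nat k) * P_coeff g k"
    unfolding numerator P_coeff_def of_nat_fact by (simp add: field_simps)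
  finally show ?thesis
    by (simp add: algebra_simps)
qed

lemma partition_sum_fun_upd_diff:
  assumes "0 < k"
  shows "partition_sum (a(Suc n := 1)) (Suc n) k (Suc D) - partition_sum (a(Suc n := 0)) (Suc n) k (Suc D)
       = 3 * of_nat k * partition_sum a n (k - 1) D
         + partition_sum a n k D * (4 * of_nat (asum a {1..n}) + 3 * of_nat k - 2 * of_nat D)"
proof -
  define F where "F Is = convolution (map (block_weight (a(Suc n := 1))) Is) (Suc D)
    - convolution (map (block_weight (a(Suc n := 0))) Is) (Suc D)" for Is
  note fresh = Suc_notin_ordered_set_partition
  have "partition_sum (a(Suc n := 1)) (Suc n) k (Suc D) - partition_sum (a(Suc n := 0)) (Suc n) k (Suc D)
      = (\<Sum>Is\<in>ordered_set_partitions (Suc n) k. F Is)"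
    by (simp add: partition_sum_def F_def sum_subtractf)
  also have "\<dots> = (\<Sum>Js\<in>ordered_set_partitions n (k - 1). \<Sum>p<k. F (insert_nth p {Suc n} Js))
      + (\<Sum>Js\<in>ordered_set_partitions n k. \<Sum>j<k. F (Js[j := insert (Suc n) (Js ! j)]))"
    by (simp add: sum_ordered_set_partitions_Suc[OF assms] sum.cartesian_product)
  also have "(\<Sum>Js\<in>ordered_set_partitions n (k - 1). \<Sum>p<k. F (insert_nth p {Suc n} Js))
      = (\<Sum>Js\<in>ordered_set_partitions n (k - 1). \<Sum>p<k. 3 * convolution (map (block_weight a) Js) D)"
  proof (intro sum.cong refl)
    fix Js p
    assume "Js \<in> ordered_set_partitions n (k - 1)" "p \<in> {..<k}"
    moreover from this have "p \<le> length Js"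
      by (simp add: ordered_set_partitions_iff)
    ultimately show "F (insert_nth p {Suc n} Js) = 3 * convolution (map (block_weight a) Js) D"
      unfolding F_def by (intro convolution_insert_singleton_diff fresh)
  qed
  also have "\<dots> = 3 * of_nat k * partition_sum a n (k - 1) D"
    by (simp add: partition_sum_def sum_distrib_left mult_ac)
  also have "(\<Sum>Js\<in>ordered_set_partitions n k. \<Sum>j<k. F (Js[j := insert (Suc n) (Js ! j)]))
      = (\<Sum>Js\<in>ordered_set_partitions n k. convolution (map (block_weight a) Js) D
          * (4 * of_nat (asum a {1..n}) + 3 * of_nat k - 2 * of_nat D))"
    by (intro sum.cong refl) (simp only: F_def sum_convolution_insert_into_block_diff)
  also have "\<dots> = partition_sum a n k D * (4 * of_nat (asum a {1..n}) + 3 * of_nat k - 2 * of_nat D)"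
    by (simp add: partition_sum_def sum_distrib_right)
  finally show ?thesis .
qed

lemma sum_collapse_by_recurrence:
  fixes w T :: "nat \<Rightarrow> 'a::comm_ring_1"
  assumes "T 0 = 0" "T (Suc n) = 0"
    and "\<And>k. w (Suc k) * (r * of_nat (Suc k)) = - (r * (b + of_nat k)) * w k"
  shows "(\<Sum>k=1..Suc n. w k * (r * of_nat k * T (k - 1) + T k * (c + r * of_nat k)))
       = (\<Sum>k=1..n. w k * T k) * (c - r * b)"
proof -
  have "(\<Sum>k=1..Suc n. w k * (r * of_nat k) * T (k - 1)) = (\<Sum>k=0..n. w (Suc k) * (r * of_nat (Suc k)) * T k)"
    using sum.shift_bounds_cl_Suc_ivl[of "\<lambda>k. w k * (r * of_nat k) * T (k - 1)" 0 n] by simp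
  also have "\<dots> = (\<Sum>k=1..n. - (r * (b + of_nat k)) * w k * T k)"
    using assms(1,3) by (simp add: sum.atLeast_Suc_atMost)
  finally have shifted: "(\<Sum>k=1..Suc n. w k * (r * of_nat k) * T (k - 1))
      = (\<Sum>k=1..n. - (r * (b + of_nat k)) * w k * T k)" .
  have "(\<Sum>k=1..Suc n. w k * (r * of_nat k * T (k - 1) + T k * (c + r * of_nat k)))
      = (\<Sum>k=1..Suc n. w k * (r * of_nat k) * T (k - 1)) + (\<Sum>k=1..Suc n. w k * T k * (c + r * of_nat k))"
    by (simp add: sum.distrib algebra_simps)
  also have "\<dots> = (\<Sum>k=1..n. - (r * (b + of_nat k)) * w k * T k) + (\<Sum>k=1..n. w k * T k * (c + r * of_nat k))"
    using assms(2) shifted by simp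
  also have "\<dots> = (\<Sum>k=1..n. w k * T k * (c - r * b))"
    by (simp add: sum.distrib[symmetric] algebra_simps)
  finally show ?thesis
    by (simp add: sum_distrib_right)
qed

lemma P_Suc_fun_upd_diff:
  "P g (Suc n) (a(Suc n := 1)) - P g (Suc n) (a(Suc n := 0))
   = (\<Sum>k=1..Suc n. P_coeff g k * (3 * of_nat k * partition_sum a n (k - 1) (g - 2 + n)
       + partition_sum a n k (g - 2 + n)
         * (4 * of_nat (asum a {1..n}) - 2 * of_nat (g - 2 + n) + 3 * of_nat k)))"
  unfolding P_eq_sum_partition_sum add_Suc_right sum_subtractf[symmetric] right_diff_distrib[symmetric]
proof (intro sum.cong refl)
  fix k
  assume "k \<in> {1..Suc n}"
  then have "0 < k"
    by simp
  then show "P_coeff g k * (partition_sum (a(Suc n := 1)) (Suc n) k (Suc (g - 2 + n))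
        - partition_sum (a(Suc n := 0)) (Suc n) k (Suc (g - 2 + n)))
      = P_coeff g k * (3 * of_nat k * partition_sum a n (k - 1) (g - 2 + n)
        + partition_sum a n k (g - 2 + n)
          * (4 * of_nat (asum a {1..n}) - 2 * of_nat (g - 2 + n) + 3 * of_nat k))"
    unfolding partition_sum_fun_upd_diff[OF \<open>0 < k\<close>] by (simp add: algebra_simps)
qed

theorem proposition5p5:
  fixes g n :: nat and a :: "nat \<Rightarrow> nat"
  assumes "g \<ge> 2" and "n \<ge> 1"
  shows "P g (n + 1) (a(n + 1 := 1)) - P g (n + 1) (a(n + 1 := 0)) =
         P g n a * (4 * (\<Sum>i=1..n. of_nat (a i)) - 8 * of_nat g + 10 - 2 * of_nat n)"
proof -
  define D where "D = g - 2 + n"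
  define c :: rat where "c = 4 * of_nat (asum a {1..n}) - 2 * of_nat D"
  have "P g (n + 1) (a(n + 1 := 1)) - P g (n + 1) (a(n + 1 := 0))
      = (\<Sum>k=1..Suc n. P_coeff g k * (3 * of_nat k * partition_sum a n (k - 1) D
          + partition_sum a n k D * (c + 3 * of_nat k)))"
    unfolding Suc_eq_plus1[symmetric] D_def c_def by (rule P_Suc_fun_upd_diff)
  also have "\<dots> = (\<Sum>k=1..n. P_coeff g k * partition_sum a n k D) * (c - 3 * (2 * of_nat g - 2))"
  proof (rule sum_collapse_by_recurrence)
    show "partition_sum a n 0 D = 0"
      using assms(2) by (simp add: partition_sum_def ordered_set_partitions_0)
    show "partition_sum a n (Suc n) D = 0"
      by (simp add: partition_sum_def ordered_set_partitions_eq_empty)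
  qed (rule P_coeff_Suc[OF assms(1)])
  also have "\<dots> = P g n a * (4 * (\<Sum>i=1..n. of_nat (a i)) - 8 * of_nat g + 10 - 2 * of_nat n)"
    using assms by (simp add: P_eq_sum_partition_sum D_def c_def asum_def of_nat_diff algebra_simps)
  finally show ?thesis .
qed

end
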